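(* Let $B$ be a normalized finite Blaschke product of degree $n$ with exactly one critical value. Then the monodromy group $G_B$ associated with $B$ is a cyclic group of order $n$.
   Context: A finite Blaschke product of degree $d$ is $B(z)=\gamma\prod_{j=1}^d \frac{z-a_j}{1-\overline{a_j}z}$ with $a_j\in\mathbb{D}$ and $|\gamma|=1$. It is normalized if $B(0)=0$, $B'(0)>0$, and $B(a)=0$ implies $B'(a)\neq 0$. Let $S$ be the set of critical points of $B$ in $\mathbb{D}$ and $B(S)$ the set of critical values. Since $0\notin B(S)$, $B^{-1}$ has $n$ distinct local branches $g_1,\dots,g_n$ near $0$ (with $g_1(0)=0$). The monodromy group $G_B$ is the group of permutations of $\{g_1,\dots,g_n\}$ induced by analytic continuation of these branches along closed loops in $\mathbb{D}\setminus B(S)$ based at $0$. *)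

theory Defs
  imports "HOL-Complex_Analysis.Complex_Analysis" "HOL-Algebra.Elementary_Groups"
begin

definition blaschke :: "complex \<Rightarrow> complex list \<Rightarrow> complex \<Rightarrow> complex" where
  "blaschke c as z = c * (\<Prod>a\<leftarrow>as. (z - a) / (1 - cnj a * z))"

definition normalized_blaschke :: "complex \<Rightarrow> complex list \<Rightarrow> bool" where
  "normalized_blaschke c as \<longleftrightarrow>
     norm c = 1 \<and> (\<forall>a\<in>set as. norm a < 1) \<and>
     blaschke c as 0 = 0 \<and>
     Im (deriv (blaschke c as) 0) = 0 \<and> Re (deriv (blaschke c as) 0) > 0 \<and>
     (\<forall>a\<in>ball 0 1. blaschke c as a = 0 \<longrightarrow> deriv (blaschke c as) a \<noteq> 0)"

definition crit_points :: "(complex \<Rightarrow> complex) \<Rightarrow> complex set" where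
  "crit_points B = {z \<in> ball 0 1. deriv B z = 0}"

definition crit_values :: "(complex \<Rightarrow> complex) \<Rightarrow> complex set" where
  "crit_values B = B ` crit_points B"

text \<open>Analytic continuation of the family of function elements (f t, U t), t in [0,1],
  along the path p (standard definition: neighbouring elements have equal germs).\<close>
definition analytic_continuation_along ::
  "(real \<Rightarrow> complex) \<Rightarrow> (real \<Rightarrow> complex \<Rightarrow> complex) \<Rightarrow> (real \<Rightarrow> complex set) \<Rightarrow> bool" where
  "analytic_continuation_along p f U \<longleftrightarrow>
     (\<forall>t\<in>{0..1}. open (U t) \<and> p t \<in> U t \<and> f t holomorphic_on U t \<and>
        (\<exists>d>0. \<forall>s\<in>{0..1}. \<bar>s - t\<bar> < d \<longrightarrow>
            p s \<in> U t \<and>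
            (\<exists>e>0. ball (p s) e \<subseteq> U s \<inter> U t \<and> (\<forall>z\<in>ball (p s) e. f s z = f t z))))"

definition local_inverse_at_0 :: "(complex \<Rightarrow> complex) \<Rightarrow> (complex \<Rightarrow> complex) \<Rightarrow> complex set \<Rightarrow> bool" where
  "local_inverse_at_0 B g V \<longleftrightarrow> (\<exists>r>0. ball 0 r \<subseteq> V \<and> (\<forall>z\<in>ball 0 r. B (g z) = z))"

text \<open>The fibre B^{-1}(0) in the disc; the local branches g_1..g_n of B^{-1} near 0
  are in bijection with it via g \<mapsto> g 0 (a local inverse is determined by its value at 0).\<close>
definition fibre0 :: "(complex \<Rightarrow> complex) \<Rightarrow> complex set" where
  "fibre0 B = {w \<in> ball 0 1. B w = 0}"

text \<open>Permutations of the branches (identified with their values at 0) induced by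
  analytic continuation along closed loops at 0 in D minus the critical values.\<close>
definition monodromy_perms :: "(complex \<Rightarrow> complex) \<Rightarrow> (complex \<Rightarrow> complex) set" where
  "monodromy_perms B = {\<sigma>. \<exists>p. path p \<and> pathstart p = 0 \<and> pathfinish p = 0 \<and>
      path_image p \<subseteq> ball 0 1 - crit_values B \<and>
      (\<forall>w\<in>fibre0 B. \<exists>f U. analytic_continuation_along p f U \<and>
           local_inverse_at_0 B (f 0) (U 0) \<and> f 0 0 = w \<and> f 1 0 = \<sigma> w) \<and>
      (\<forall>w. w \<notin> fibre0 B \<longrightarrow> \<sigma> w = w)}"

definition monodromy_group :: "(complex \<Rightarrow> complex) \<Rightarrow> (complex \<Rightarrow> complex) monoid" where
  "monodromy_group B = \<lparr>carrier = monodromy_perms B, monoid.mult = (\<circ>), one = id\<rparr>"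

end

theory Submission
  imports Defs "HOL-Computational_Algebra.Fundamental_Theorem_Algebra"
begin

text \<open>Write phi a z = (z - a) / (1 - cnj a * z) for the Blaschke factor at a and let v be the
  only critical value of B.  Then phi v o B is again a Blaschke product lam * prod_z phi z ^ k z.
  If it had two distinct zeros, its logarithmic derivative, cleared of denominators, would be a
  nonconstant self-reciprocal polynomial without zeros on the unit circle; a zero of it inside the
  disc is a critical point of B whose value is not v.  Hence phi v (B x) = lam * phi b x ^ n.

  So the fibre of B over 0 is the set of w with lam * phi b w ^ n = - v.  Continuing a branch
  of the inverse of B along a loop continues phi b of it as an n-th root of (phi v) / lam, which
  can only change by an n-th root of unity; conversely the loop winding k times around v
  multiplies phi b by cis (2 pi k / n).  The monodromy group is therefore the group of these
  rotations of the fibre, isomorphic to the n-th roots of unity.\<close>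

section \<open>Blaschke factors\<close>

definition blaschke_factor :: "complex \<Rightarrow> complex \<Rightarrow> complex" where
  "blaschke_factor a z = (z - a) / (1 - cnj a * z)"

lemma norm_blaschke_denom_square_diff:
  "cmod (1 - cnj a * z)^2 - cmod (z - a)^2 = (1 - cmod z^2) * (1 - cmod a^2)"
proof -
  have "complex_of_real (cmod (1 - cnj a * z)^2 - cmod (z - a)^2) = of_real ((1 - cmod z^2) * (1 - cmod a^2))"
    by (simp only: of_real_diff of_real_mult of_real_1 complex_norm_square complex_cnj_diff
        complex_cnj_mult complex_cnj_one complex_cnj_cnj) (simp add: algebra_simps)
  then show ?thesis using of_real_eq_iff by blast
qed

lemma blaschke_denom_nonzero: "cmod a < 1 \<Longrightarrow> cmod z \<le> 1 \<Longrightarrow> 1 - cnj a * z \<noteq> 0"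
proof
  assume "cmod a < 1" "cmod z \<le> 1" "1 - cnj a * z = 0"
  then have "cmod (cnj a * z) = 1" by simp
  moreover have "cmod (cnj a * z) \<le> cmod a" using \<open>cmod z \<le> 1\<close> by (simp add: norm_mult mult_left_le)
  ultimately show False using \<open>cmod a < 1\<close> by simp
qed

lemma one_minus_cnj_mult_self_nonzero: "cmod a < 1 \<Longrightarrow> 1 - cnj a * a \<noteq> 0"
  using blaschke_denom_nonzero[of a a] by simp

lemma norm_blaschke_factor_less_one:
  assumes "cmod a < 1" "cmod z < 1"
  shows "cmod (blaschke_factor a z) < 1"
proof -
  have "(1 - cmod z^2) * (1 - cmod a^2) > 0" using assms by (simp add: abs_square_less_1)
  then have "cmod (z - a)^2 < cmod (1 - cnj a * z)^2" using norm_blaschke_denom_square_diff[of a z] by linarith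
  then have "cmod (z - a) < cmod (1 - cnj a * z)" using power2_less_imp_less by fastforce
  then show ?thesis using blaschke_denom_nonzero[of a z] assms
    by (simp add: blaschke_factor_def norm_divide divide_less_eq)
qed

lemma norm_denom_le_norm_numer:
  assumes "cmod a < 1" "cmod z \<ge> 1"
  shows "cmod (1 - cnj a * z) \<le> cmod (z - a)"
proof -
  have "(1 - cmod z^2) * (1 - cmod a^2) \<le> 0" using assms
    by (intro mult_nonpos_nonneg) (auto simp: abs_square_le_1 one_le_power power_le_one)
  then have "cmod (1 - cnj a * z)^2 \<le> cmod (z - a)^2" using norm_blaschke_denom_square_diff[of a z] by linarith
  then show ?thesis using power2_le_imp_le by fastforce
qed

lemma norm_less_one_if_blaschke_factor:
  assumes "cmod a < 1" "1 - cnj a * z \<noteq> 0" "cmod (blaschke_factor a z) < 1"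
  shows "cmod z < 1"
proof (rule ccontr)
  assume "\<not> cmod z < 1"
  then have "cmod (1 - cnj a * z) \<le> cmod (z - a)" using norm_denom_le_norm_numer assms by simp
  then show False using assms by (simp add: blaschke_factor_def norm_divide divide_less_eq)
qed

lemma blaschke_factor_inverse:
  assumes "cmod a < 1" "1 + cnj a * z \<noteq> 0"
  shows "blaschke_factor a (blaschke_factor (-a) z) = z"
proof -
  define D where "D = 1 + cnj a * z"
  have D: "D \<noteq> 0" using assms D_def by simp
  have a: "1 - cnj a * a \<noteq> 0" using one_minus_cnj_mult_self_nonzero assms by simp
  have "(z + a) / D - a = z * (1 - cnj a * a) / D" "1 - cnj a * ((z + a) / D) = (1 - cnj a * a) / D"
    using D by (simp_all add: D_def field_simps)
  then show ?thesis using D a by (simp add: blaschke_factor_def D_def)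
qed

lemma blaschke_factor_inverse_disc:
  "cmod a < 1 \<Longrightarrow> cmod z < 1 \<Longrightarrow> blaschke_factor a (blaschke_factor (-a) z) = z"
  using blaschke_factor_inverse[of a z] blaschke_denom_nonzero[of "-a" z] by simp

lemma blaschke_factor_inverse_disc':
  "cmod a < 1 \<Longrightarrow> cmod z < 1 \<Longrightarrow> blaschke_factor (-a) (blaschke_factor a z) = z"
  using blaschke_factor_inverse[of "-a" z] blaschke_denom_nonzero[of a z] by simp

lemma holomorphic_on_blaschke_factor:
  assumes "cmod a < 1"
  shows "blaschke_factor a holomorphic_on ball 0 1"
proof -
  have "cnj a * z \<noteq> 1" if "z \<in> ball 0 1" for z
    using blaschke_denom_nonzero[OF assms, of z] that by simp
  then show ?thesis unfolding blaschke_factor_def by (intro holomorphic_intros) auto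
qed

lemma continuous_on_blaschke_factor: "cmod a < 1 \<Longrightarrow> continuous_on (ball 0 1) (blaschke_factor a)"
  by (simp add: holomorphic_on_imp_continuous_on holomorphic_on_blaschke_factor)

lemma blaschke_factor_eq_0_iff: "1 - cnj a * z \<noteq> 0 \<Longrightarrow> blaschke_factor a z = 0 \<longleftrightarrow> z = a"
  by (simp add: blaschke_factor_def)

lemma has_field_derivative_blaschke_factor:
  assumes "1 - cnj a * x \<noteq> 0"
  shows "(blaschke_factor a has_field_derivative (1 - cnj a * a) / (1 - cnj a * x)^2) (at x)"
proof -
  have deriv: "((\<lambda>x. (x - a) / (1 - cnj a * x)) has_field_derivative
        ((1 - 0) * (1 - cnj a * x) - (x - a) * (0 - cnj a * 1)) / ((1 - cnj a * x) * (1 - cnj a * x))) (at x)"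
    by (intro DERIV_divide DERIV_diff DERIV_cmult DERIV_ident DERIV_const assms)
  have "(1 - 0) * (1 - cnj a * x) - (x - a) * (0 - cnj a * 1) = 1 - cnj a * a"
    by (simp add: algebra_simps)
  with deriv show ?thesis by (simp only: blaschke_factor_def[abs_def] power2_eq_square)
qed

section \<open>Analytic continuation along paths\<close>

lemma continuous_on_analytic_continuation_along:
  assumes AC: "analytic_continuation_along p f U" and "path p"
  shows "continuous_on {0..1} (\<lambda>t. f t (p t))"
  unfolding continuous_on_eq_continuous_within
proof
  fix t :: real assume t: "t \<in> {0..1}"
  obtain d where "d > 0" and near: "\<forall>s\<in>{0..1}. \<bar>s - t\<bar> < d \<longrightarrow>
      (\<exists>e>0. ball (p s) e \<subseteq> U s \<inter> U t \<and> (\<forall>z\<in>ball (p s) e. f s z = f t z))"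
    using AC t unfolding analytic_continuation_along_def by blast
  have "isCont (f t) (p t)"
    using AC t holomorphic_on_imp_continuous_on continuous_on_eq_continuous_at
    unfolding analytic_continuation_along_def by blast
  moreover have "continuous (at t within {0..1}) p"
    using \<open>path p\<close> t unfolding path_def continuous_on_eq_continuous_within by blast
  ultimately have "continuous (at t within {0..1}) (\<lambda>s. f t (p s))"
    by (rule continuous_within_compose3)
  then show "continuous (at t within {0..1}) (\<lambda>t. f t (p t))"
  proof (rule continuous_transform_within[OF _ \<open>d > 0\<close> t])
    fix s assume "s \<in> {0..1}" "dist s t < d"
    then show "f t (p s) = f s (p s)" using near by (force simp: dist_real_def)
  qed
qed

lemma holomorphic_vanishing_near_iff_on_ball:
  assumes "h holomorphic_on ball a r" "c \<in> ball a r"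
  shows "(\<forall>\<^sub>F z in nhds c. h z = 0) \<longleftrightarrow> (\<forall>z\<in>ball a r. h z = 0)"
proof
  assume "\<forall>\<^sub>F z in nhds c. h z = 0"
  then obtain e1 where "e1 > 0" and e1: "\<forall>z. dist z c < e1 \<longrightarrow> h z = 0"
    unfolding eventually_nhds_metric by blast
  obtain e2 where "e2 > 0" "ball c e2 \<subseteq> ball a r"
    using assms(2) open_ball open_contains_ball by blast
  show "\<forall>z\<in>ball a r. h z = 0"
  proof
    fix z assume "z \<in> ball a r"
    show "h z = 0"
    proof (rule analytic_continuation_open[of "ball c (min e1 e2)" "ball a r" h "\<lambda>_. 0"])
      show "ball c (min e1 e2) \<noteq> {}" using \<open>e1 > 0\<close> \<open>e2 > 0\<close> by simp
      show "ball c (min e1 e2) \<subseteq> ball a r" using \<open>ball c e2 \<subseteq> ball a r\<close> by auto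
      show "\<And>z. z \<in> ball c (min e1 e2) \<Longrightarrow> h z = 0" using e1 by (simp add: dist_commute)
    qed (use assms \<open>z \<in> ball a r\<close> in auto)
  qed
next
  assume "\<forall>z\<in>ball a r. h z = 0"
  then show "\<forall>\<^sub>F z in nhds c. h z = 0"
    using eventually_nhds_in_open[OF open_ball assms(2)] by (auto elim: eventually_mono)
qed

lemma analytic_continuation_along_relation_locally_constant:
  assumes AC: "analytic_continuation_along p f U" and "path p" "open D" "path_image p \<subseteq> D"
    and H: "\<And>g S. g holomorphic_on S \<Longrightarrow> S \<subseteq> D \<Longrightarrow> (\<lambda>z. H (g z) z) holomorphic_on S"
    and t: "t \<in> {0..1}"
  shows "\<exists>d>0. \<forall>s\<in>{0..1}. \<bar>s - t\<bar> < d \<longrightarrow>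
           (\<forall>\<^sub>F z in nhds (p s). H (f s z) z = 0) = (\<forall>\<^sub>F z in nhds (p t). H (f t z) z = 0)"
proof -
  obtain d1 where "d1 > 0" and near: "\<forall>s\<in>{0..1}. \<bar>s - t\<bar> < d1 \<longrightarrow>
      (\<exists>e>0. ball (p s) e \<subseteq> U s \<inter> U t \<and> (\<forall>z\<in>ball (p s) e. f s z = f t z))"
    using AC t unfolding analytic_continuation_along_def by blast
  have "open (U t \<inter> D)" "p t \<in> U t \<inter> D"
    using AC t assms(3,4) unfolding analytic_continuation_along_def path_image_def by auto
  then obtain r where "r > 0" and r: "ball (p t) r \<subseteq> U t \<inter> D"
    using open_contains_ball_eq by blast
  obtain d2 where "d2 > 0" and d2: "\<forall>s\<in>{0..1}. dist s t < d2 \<longrightarrow> dist (p s) (p t) < r"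
    using \<open>path p\<close> t \<open>r > 0\<close> unfolding path_def continuous_on_iff by blast
  have "f t holomorphic_on U t" using AC t unfolding analytic_continuation_along_def by blast
  then have hol: "(\<lambda>z. H (f t z) z) holomorphic_on ball (p t) r"
    using r by (intro H) (auto elim: holomorphic_on_subset)
  show ?thesis
  proof (intro exI[of _ "min d1 d2"] conjI ballI impI)
    show "min d1 d2 > 0" using \<open>d1 > 0\<close> \<open>d2 > 0\<close> by simp
    fix s assume s: "s \<in> {0..1}" "\<bar>s - t\<bar> < min d1 d2"
    then obtain e where "e > 0" and e: "\<forall>z\<in>ball (p s) e. f s z = f t z"
      using near by auto
    have "\<forall>\<^sub>F z in nhds (p s). f s z = f t z"
      using eventually_nhds_ball[OF \<open>e > 0\<close>, of "p s"] by (rule eventually_mono) (use e in auto)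
    then have "(\<forall>\<^sub>F z in nhds (p s). H (f s z) z = 0) = (\<forall>\<^sub>F z in nhds (p s). H (f t z) z = 0)"
      by (intro eventually_subst) (auto elim: eventually_mono)
    also have "\<dots> = (\<forall>z\<in>ball (p t) r. H (f t z) z = 0)"
      using d2 s by (intro holomorphic_vanishing_near_iff_on_ball[OF hol]) (simp add: dist_real_def dist_commute)
    also have "\<dots> = (\<forall>\<^sub>F z in nhds (p t). H (f t z) z = 0)"
      using \<open>r > 0\<close> by (intro holomorphic_vanishing_near_iff_on_ball[OF hol, symmetric]) simp
    finally show "(\<forall>\<^sub>F z in nhds (p s). H (f s z) z = 0) = (\<forall>\<^sub>F z in nhds (p t). H (f t z) z = 0)" .
  qed
qed

lemma analytic_continuation_along_preserves_relation:
  assumes AC: "analytic_continuation_along p f U" and "path p" "open D" "path_image p \<subseteq> D"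
    and H: "\<And>g S. g holomorphic_on S \<Longrightarrow> S \<subseteq> D \<Longrightarrow> (\<lambda>z. H (g z) z) holomorphic_on S"
    and start: "\<forall>\<^sub>F z in nhds (p 0). H (f 0 z) z = 0"
    and t: "t \<in> {0..1}"
  shows "H (f t (p t)) (p t) = 0"
proof -
  define P where "P s \<longleftrightarrow> (\<forall>\<^sub>F z in nhds (p s). H (f s z) z = 0)" for s
  have "P constant_on {0..1}"
  proof (rule locally_constant_imp_constant[OF connected_Icc])
    fix a :: real assume a: "a \<in> {0..1}"
    obtain d where "d > 0" and d: "\<forall>s\<in>{0..1}. \<bar>s - a\<bar> < d \<longrightarrow> P s = P a"
      using analytic_continuation_along_relation_locally_constant[where H = H, OF assms(1-5) a]
      unfolding P_def by blast
    have "openin (top_of_set {0..1}) ({0..1} \<inter> ball a d)" by (simp add: openin_open_Int)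
    moreover have "a \<in> {0..1} \<inter> ball a d" using a \<open>d > 0\<close> by simp
    moreover have "\<forall>s\<in>{0..1} \<inter> ball a d. P s = P a"
      using d by (simp add: dist_real_def abs_minus_commute)
    ultimately show "\<exists>T. openin (top_of_set {0..1}) T \<and> a \<in> T \<and> (\<forall>s\<in>T. P s = P a)" by blast
  qed
  then have "P t"
    using start t unfolding constant_on_def P_def by (metis atLeastAtMost_iff order_refl zero_le_one)
  then show ?thesis unfolding P_def by (rule eventually_nhds_x_imp_x)
qed

lemma continuous_same_power_ratio_constant:
  fixes f g :: "real \<Rightarrow> complex"
  assumes "connected S" "continuous_on S f" "continuous_on S g" "n > 0"
    and "\<And>t. t \<in> S \<Longrightarrow> f t ^ n = g t ^ n \<and> g t \<noteq> 0"
    and "s \<in> S" "t \<in> S"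
  shows "f s / g s = f t / g t"
proof -
  have "(\<lambda>t. f t / g t) ` S \<subseteq> {z. z ^ n = 1}"
    using assms(5) by (auto simp: power_divide)
  then have "finite ((\<lambda>t. f t / g t) ` S)"
    using finite_roots_unity[of n] \<open>n > 0\<close> finite_subset by blast
  moreover have "continuous_on S (\<lambda>t. f t / g t)"
    using assms(2,3,5) by (intro continuous_on_divide) auto
  ultimately have "(\<lambda>t. f t / g t) constant_on S"
    using continuous_finite_range_constant[OF \<open>connected S\<close>] by blast
  then show ?thesis using assms(6,7) unfolding constant_on_def by metis
qed

lemma exp_Ln_divide_power:
  assumes "n > 0" "y \<noteq> 0"
  shows "exp (Ln y / of_nat n) ^ n = y"
proof -
  have "exp (Ln y / of_nat n) ^ n = exp (of_nat n * (Ln y / of_nat n))" by (rule exp_of_nat_mult[symmetric])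
  then show ?thesis using assms by simp
qed

section \<open>Monodromy of a unicritical Blaschke product in normal form\<close>

locale unicritical_form =
  fixes B :: "complex \<Rightarrow> complex" and b v l :: complex and n :: nat
  assumes b_in_disc: "cmod b < 1" and v_in_disc: "cmod v < 1" and norm_l: "cmod l = 1"
    and b_nonzero: "b \<noteq> 0" and v_nonzero: "v \<noteq> 0" and n_ge_2: "n \<ge> 2"
    and crit_values_eq: "crit_values B = {v}"
    and B_eq: "\<And>x. x \<in> ball 0 1 \<Longrightarrow> B x = blaschke_factor (-v) (l * blaschke_factor b x ^ n)"
    and B_0: "B 0 = 0"
begin

lemma l_nonzero: "l \<noteq> 0"
  using norm_l by auto

lemma norm_l_blaschke_factor_power_less_one:
  "x \<in> ball 0 1 \<Longrightarrow> cmod (l * blaschke_factor b x ^ n) < 1"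
  using norm_blaschke_factor_less_one[OF b_in_disc, of x] norm_l n_ge_2
  by (simp add: norm_mult norm_power power_less_one_iff)

lemma blaschke_factor_v_B: "x \<in> ball 0 1 \<Longrightarrow> blaschke_factor v (B x) = l * blaschke_factor b x ^ n"
  using B_eq blaschke_factor_inverse_disc[OF v_in_disc norm_l_blaschke_factor_power_less_one] by simp

lemma norm_less_one_if_power_eq:
  assumes "l * X ^ n = blaschke_factor v z" "cmod z < 1"
  shows "cmod X < 1"
proof -
  have "cmod (l * X ^ n) < 1"
    using assms norm_blaschke_factor_less_one[OF v_in_disc] by simp
  then have "cmod X ^ n < 1" using norm_l by (simp add: norm_mult norm_power)
  then show ?thesis using power_less_one_iff[OF norm_ge_zero] by blast
qed

lemma B_eq_if_power_eq:
  assumes "l * blaschke_factor b x ^ n = blaschke_factor v z" "cmod x < 1" "cmod z < 1"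
  shows "B x = z"
  using B_eq[of x] assms blaschke_factor_inverse_disc'[OF v_in_disc] by simp

text \<open>Clearing denominators in phi v z = l * phi b x ^ n gives a relation that is holomorphic in
  x and z jointly and whose zeros over the disc form the graph of B; it is this relation that
  analytic continuation of a branch of the inverse preserves.\<close>

definition inverse_relation :: "complex \<Rightarrow> complex \<Rightarrow> complex" where
  "inverse_relation x z = l * (x - b) ^ n - blaschke_factor v z * (1 - cnj b * x) ^ n"

lemma inverse_relation_eq_0_iff:
  assumes "cmod z < 1"
  shows "inverse_relation x z = 0 \<longleftrightarrow> cmod x < 1 \<and> B x = z"
proof
  assume rel: "inverse_relation x z = 0"
  have den: "1 - cnj b * x \<noteq> 0"
  proof
    assume "1 - cnj b * x = 0"
    then have "l * (x - b) ^ n = 0" using rel n_ge_2 by (simp add: inverse_relation_def)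
    then have "x = b" using l_nonzero by simp
    then show False
      using \<open>1 - cnj b * x = 0\<close> one_minus_cnj_mult_self_nonzero[OF b_in_disc] by simp
  qed
  then have eq: "l * blaschke_factor b x ^ n = blaschke_factor v z"
    using rel by (simp add: inverse_relation_def blaschke_factor_def power_divide)
  then have "cmod (blaschke_factor b x) < 1"
    using norm_less_one_if_power_eq assms by blast
  then have "cmod x < 1"
    using norm_less_one_if_blaschke_factor[OF b_in_disc den] by simp
  then show "cmod x < 1 \<and> B x = z" using B_eq_if_power_eq[OF eq _ assms] by simp
next
  assume "cmod x < 1 \<and> B x = z"
  then have "1 - cnj b * x \<noteq> 0" "blaschke_factor v z = l * blaschke_factor b x ^ n"
    using blaschke_denom_nonzero[OF b_in_disc, of x] blaschke_factor_v_B[of x] by auto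
  then show "inverse_relation x z = 0"
    by (simp add: inverse_relation_def blaschke_factor_def power_divide field_simps)
qed

lemma holomorphic_inverse_relation:
  assumes "g holomorphic_on S" "S \<subseteq> ball 0 1"
  shows "(\<lambda>z. inverse_relation (g z) z) holomorphic_on S"
proof -
  have "blaschke_factor v holomorphic_on S"
    using holomorphic_on_blaschke_factor[OF v_in_disc] holomorphic_on_subset assms(2) by blast
  then show ?thesis unfolding inverse_relation_def by (intro holomorphic_intros assms(1))
qed

lemma continuation_of_local_inverse:
  assumes AC: "analytic_continuation_along p f U" and "path p" "path_image p \<subseteq> ball 0 1"
    and "pathstart p = 0" "local_inverse_at_0 B (f 0) (U 0)" "cmod (f 0 0) < 1"
    and t: "t \<in> {0..1}"
  shows "cmod (f t (p t)) < 1 \<and> B (f t (p t)) = p t"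
proof -
  obtain r where "r > 0" "ball 0 r \<subseteq> U 0" and inv: "\<forall>z\<in>ball 0 r. B (f 0 z) = z"
    using assms(5) unfolding local_inverse_at_0_def by blast
  have "isCont (f 0) 0"
    using AC \<open>r > 0\<close> \<open>ball 0 r \<subseteq> U 0\<close> unfolding analytic_continuation_along_def
    by (metis atLeastAtMost_iff centre_in_ball continuous_on_eq_continuous_at
        holomorphic_on_imp_continuous_on order_refl subsetD zero_le_one)
  then have "\<forall>\<^sub>F z in nhds 0. f 0 z \<in> ball 0 1"
    using assms(6) unfolding isCont_def by (intro topological_tendstoD) (auto simp: tendsto_nhds_iff)
  moreover have "\<forall>\<^sub>F z in nhds 0. z \<in> ball 0 r \<and> z \<in> ball 0 1"
    using \<open>r > 0\<close> by (intro eventually_conj eventually_nhds_ball) auto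
  ultimately have "\<forall>\<^sub>F z in nhds (p 0). inverse_relation (f 0 z) z = 0"
    using assms(4) inv unfolding pathstart_def
    by (auto elim!: eventually_elim2 simp: inverse_relation_eq_0_iff)
  then have "inverse_relation (f t (p t)) (p t) = 0"
    by (intro analytic_continuation_along_preserves_relation[OF AC \<open>path p\<close> open_ball assms(3)]
        holomorphic_inverse_relation t)
  moreover have "cmod (p t) < 1" using assms(3) t by (force simp: path_image_def)
  ultimately show ?thesis using inverse_relation_eq_0_iff by blast
qed

definition fibre_rotation :: "complex \<Rightarrow> complex \<Rightarrow> complex" where
  "fibre_rotation \<mu> w = (if w \<in> fibre0 B then blaschke_factor (-b) (\<mu> * blaschke_factor b w) else w)"

lemma fibre0_iff: "w \<in> fibre0 B \<longleftrightarrow> cmod w < 1 \<and> l * blaschke_factor b w ^ n = -v"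
proof -
  have v: "blaschke_factor v 0 = -v" by (simp add: blaschke_factor_def)
  show ?thesis
  proof
    assume "w \<in> fibre0 B"
    then have "cmod w < 1" "B w = 0" by (auto simp: fibre0_def)
    then show "cmod w < 1 \<and> l * blaschke_factor b w ^ n = -v"
      using blaschke_factor_v_B[of w] v by simp
  next
    assume "cmod w < 1 \<and> l * blaschke_factor b w ^ n = -v"
    then show "w \<in> fibre0 B" using B_eq_if_power_eq[of w 0] v by (simp add: fibre0_def)
  qed
qed

lemma zero_in_fibre0: "0 \<in> fibre0 B"
  using B_0 by (simp add: fibre0_def)

lemma lift_of_loop:
  assumes "path p" "pathstart p = 0" "pathfinish p = 0" "path_image p \<subseteq> ball 0 1 - {v}"
    and "analytic_continuation_along p f U" "local_inverse_at_0 B (f 0) (U 0)" "w \<in> fibre0 B" "f 0 0 = w"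
  obtains R where "continuous_on {0..1} R"
    "\<And>t. t \<in> {0..1} \<Longrightarrow> l * R t ^ n = blaschke_factor v (p t) \<and> R t \<noteq> 0"
    "R 0 = blaschke_factor b w" "R 1 = blaschke_factor b (f 1 0)" "cmod (f 1 0) < 1"
proof -
  have pt: "cmod (p t) < 1" "p t \<noteq> v" if "t \<in> {0..1}" for t
    using assms(4) that by (force simp: path_image_def)+
  have p01: "p 0 = 0" "p 1 = 0" using assms(2,3) by (simp_all add: pathstart_def pathfinish_def)
  have lift: "cmod (f t (p t)) < 1 \<and> B (f t (p t)) = p t" if "t \<in> {0..1}" for t
    using continuation_of_local_inverse[OF assms(5,1) _ assms(2,6) _ that] assms(4,7,8)
    by (auto simp: fibre0_def)
  have "continuous_on {0..1} (\<lambda>t. blaschke_factor b (f t (p t)))"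
    using lift by (intro continuous_on_compose2[OF continuous_on_blaschke_factor[OF b_in_disc]
        continuous_on_analytic_continuation_along[OF assms(5,1)]]) auto
  moreover have "l * blaschke_factor b (f t (p t)) ^ n = blaschke_factor v (p t) \<and>
      blaschke_factor b (f t (p t)) \<noteq> 0" if t: "t \<in> {0..1}" for t
  proof -
    have "blaschke_factor v (p t) \<noteq> 0"
      using pt[OF t] blaschke_factor_eq_0_iff blaschke_denom_nonzero[OF v_in_disc] by force
    then show ?thesis
      using blaschke_factor_v_B[of "f t (p t)", symmetric] lift[OF t] n_ge_2 by (auto simp: power_0_left)
  qed
  ultimately show thesis
    by (rule that) (use assms(8) p01 lift[of 0] lift[of 1] in auto)
qed

lemma monodromy_perm_is_rotation:
  assumes "\<sigma> \<in> monodromy_perms B"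
  shows "\<exists>\<mu>. \<mu> ^ n = 1 \<and> \<sigma> = fibre_rotation \<mu>"
proof -
  obtain p where loop: "path p" "pathstart p = 0" "pathfinish p = 0" "path_image p \<subseteq> ball 0 1 - {v}"
    and cont: "\<forall>w\<in>fibre0 B. \<exists>f U. analytic_continuation_along p f U \<and>
           local_inverse_at_0 B (f 0) (U 0) \<and> f 0 0 = w \<and> f 1 0 = \<sigma> w"
    and fixed: "\<forall>w. w \<notin> fibre0 B \<longrightarrow> \<sigma> w = w"
    using assms crit_values_eq unfolding monodromy_perms_def by auto
  have lift: "\<exists>R. continuous_on {0..1} R \<and> (\<forall>t\<in>{0..1}. l * R t ^ n = blaschke_factor v (p t) \<and> R t \<noteq> 0)
      \<and> R 0 = blaschke_factor b w \<and> R 1 = blaschke_factor b (\<sigma> w) \<and> cmod (\<sigma> w) < 1"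
    if "w \<in> fibre0 B" for w
    using cont that lift_of_loop[OF loop] by metis
  obtain R0 where R0: "continuous_on {0..1} R0" "\<forall>t\<in>{0..1}. l * R0 t ^ n = blaschke_factor v (p t) \<and> R0 t \<noteq> 0"
    "R0 0 = blaschke_factor b 0" "R0 1 = blaschke_factor b (\<sigma> 0)"
    using lift[OF zero_in_fibre0] by blast
  define \<mu> where "\<mu> = R0 1 / R0 0"
  have "l * R0 1 ^ n = l * R0 0 ^ n" and "R0 0 \<noteq> 0"
    using R0(2)[rule_format, of 0] R0(2)[rule_format, of 1] loop(2,3)
    by (simp_all add: pathstart_def pathfinish_def)
  then have "\<mu> ^ n = 1" using l_nonzero by (simp add: \<mu>_def power_divide)
  moreover have "\<sigma> w = fibre_rotation \<mu> w" for w
  proof (cases "w \<in> fibre0 B")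
    case True
    then obtain R where R: "continuous_on {0..1} R" "\<forall>t\<in>{0..1}. l * R t ^ n = blaschke_factor v (p t) \<and> R t \<noteq> 0"
        "R 0 = blaschke_factor b w" "R 1 = blaschke_factor b (\<sigma> w)" "cmod (\<sigma> w) < 1"
      using lift by blast
    have "R t ^ n = R0 t ^ n \<and> R0 t \<noteq> 0" if "t \<in> {0..1}" for t
      using R0(2)[rule_format, OF that] R(2)[rule_format, OF that] l_nonzero
      by (metis mult_left_cancel)
    then have "R 1 / R0 1 = R 0 / R0 0"
      using n_ge_2 by (intro continuous_same_power_ratio_constant[where n = n, OF connected_Icc R(1) R0(1)]) auto
    then have "blaschke_factor b (\<sigma> w) = \<mu> * blaschke_factor b w"
      using R0(2) R(3,4) by (simp add: \<mu>_def field_simps)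
    then show ?thesis
      using True R(5) blaschke_factor_inverse_disc'[OF b_in_disc, of "\<sigma> w"] by (simp add: fibre_rotation_def)
  qed (use fixed in \<open>simp add: fibre_rotation_def\<close>)
  ultimately show ?thesis by blast
qed

text \<open>Explicit loops realising the rotations: in the coordinate phi v, the loop with index k
  runs k times around the circle of radius cmod v about 0, starting and ending at phi v 0 = - v.
  Near the point of the loop at time t the quotient loop_ratio k t is close to 1, so its principal
  n-th root is holomorphic there; the factor cis (2 pi k t / n) makes these local branches of the
  inverse of B fit together along the loop.\<close>

definition loop_around_v :: "nat \<Rightarrow> real \<Rightarrow> complex" where
  "loop_around_v k t = blaschke_factor (-v) (-v * cis (2 * pi * k * t))"

definition loop_ratio :: "nat \<Rightarrow> real \<Rightarrow> complex \<Rightarrow> complex" where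
  "loop_ratio k t z = blaschke_factor v z / (-v * cis (2 * pi * k * t))"

definition branch_domain :: "nat \<Rightarrow> real \<Rightarrow> complex set" where
  "branch_domain k t = ball 0 1 \<inter> {z. Re (loop_ratio k t z) > 0}"

definition branch :: "nat \<Rightarrow> complex \<Rightarrow> real \<Rightarrow> complex \<Rightarrow> complex" where
  "branch k w t z = blaschke_factor (-b)
     (blaschke_factor b w * cis (2 * pi * k * t / n) * exp (Ln (loop_ratio k t z) / n))"

lemma norm_v_cis_less_one: "cmod (-v * cis x) < 1"
  using v_in_disc by (simp add: norm_mult)

lemma loop_around_v:
  "cmod (loop_around_v k t) < 1 \<and> blaschke_factor v (loop_around_v k t) = -v * cis (2 * pi * k * t)"
  using norm_blaschke_factor_less_one[of "-v"] blaschke_factor_inverse_disc[OF v_in_disc]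
    v_in_disc norm_v_cis_less_one by (simp add: loop_around_v_def)

lemma loop_around_v_avoids_v: "loop_around_v k t \<noteq> v"
  using loop_around_v[of k t] v_nonzero by (auto simp: blaschke_factor_def)

lemma loop_around_v_0: "loop_around_v k 0 = 0" and loop_around_v_1: "loop_around_v k 1 = 0"
  by (simp_all add: loop_around_v_def blaschke_factor_def cis_multiple_2pi)

lemma path_loop_around_v: "path (loop_around_v k)"
proof -
  have "1 - cnj (-v) * (-v * cis (2 * pi * k * t)) \<noteq> 0" for t
    by (rule blaschke_denom_nonzero) (simp add: v_in_disc, rule less_imp_le[OF norm_v_cis_less_one])
  then have "continuous_on {0..1} (\<lambda>t. (-v * cis (2 * pi * k * t) - - v) /
      (1 - cnj (-v) * (-v * cis (2 * pi * k * t))))"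
    by (intro continuous_intros) auto
  then show ?thesis by (simp add: path_def loop_around_v_def blaschke_factor_def)
qed

lemma loop_ratio_loop_around_v: "loop_ratio k t (loop_around_v k t) = 1"
  using loop_around_v[of k t] v_nonzero by (simp add: loop_ratio_def)

lemma open_branch_domain: "open (branch_domain k t)"
proof -
  have "continuous_on (ball 0 1) (\<lambda>z. Re (loop_ratio k t z))"
    unfolding loop_ratio_def using v_nonzero
    by (intro continuous_intros continuous_on_blaschke_factor[OF v_in_disc]) auto
  then have "open (ball 0 1 \<inter> (\<lambda>z. Re (loop_ratio k t z)) -` {0<..})"
    by (intro continuous_open_preimage) auto
  moreover have "ball 0 1 \<inter> (\<lambda>z. Re (loop_ratio k t z)) -` {0<..} = branch_domain k t"
    by (auto simp: branch_domain_def)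
  ultimately show ?thesis by simp
qed

lemma loop_around_v_in_branch_domain: "loop_around_v k t \<in> branch_domain k t"
  using loop_around_v[of k t] loop_ratio_loop_around_v[of k t] by (simp add: branch_domain_def)

lemma branch_power:
  assumes "w \<in> fibre0 B" "z \<in> branch_domain k t"
  shows "l * (blaschke_factor b w * cis (2 * pi * k * t / n) * exp (Ln (loop_ratio k t z) / n)) ^ n
         = blaschke_factor v z"
proof -
  have "loop_ratio k t z \<noteq> 0" using assms(2) by (auto simp: branch_domain_def)
  then have "l * (blaschke_factor b w * cis (2 * pi * k * t / n) * exp (Ln (loop_ratio k t z) / n)) ^ n
      = (l * blaschke_factor b w ^ n) * cis (2 * pi * k * t / n) ^ n * loop_ratio k t z"
    using n_ge_2 by (simp add: power_mult_distrib exp_Ln_divide_power mult_ac)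
  also have "\<dots> = -v * cis (2 * pi * k * t) * loop_ratio k t z"
    using assms(1) fibre0_iff n_ge_2 by (simp add: Complex.DeMoivre)
  also have "\<dots> = blaschke_factor v z"
    using v_nonzero by (simp add: loop_ratio_def)
  finally show ?thesis .
qed

lemma branch_inverse:
  assumes "w \<in> fibre0 B" "z \<in> branch_domain k t"
  shows "cmod (branch k w t z) < 1 \<and> B (branch k w t z) = z"
proof -
  define X where "X = blaschke_factor b w * cis (2 * pi * k * t / n) * exp (Ln (loop_ratio k t z) / n)"
  have z: "cmod z < 1" using assms(2) by (simp add: branch_domain_def)
  have pow: "l * X ^ n = blaschke_factor v z" unfolding X_def by (rule branch_power[OF assms])
  then have X: "cmod X < 1" using norm_less_one_if_power_eq z by blast
  have "branch k w t z = blaschke_factor (-b) X" by (simp add: branch_def X_def)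
  moreover have "blaschke_factor b (blaschke_factor (-b) X) = X"
    by (rule blaschke_factor_inverse_disc[OF b_in_disc X])
  ultimately show ?thesis
    using pow X z norm_blaschke_factor_less_one[of "-b" X] b_in_disc B_eq_if_power_eq by auto
qed

lemma holomorphic_branch:
  assumes "w \<in> fibre0 B"
  shows "branch k w t holomorphic_on branch_domain k t"
proof -
  define X where "X z = blaschke_factor b w * cis (2 * pi * k * t / n) * exp (Ln (loop_ratio k t z) / n)" for z
  have "branch_domain k t \<subseteq> ball 0 1" by (auto simp: branch_domain_def)
  then have "loop_ratio k t holomorphic_on branch_domain k t"
    unfolding loop_ratio_def using v_nonzero
    by (intro holomorphic_intros holomorphic_on_subset[OF holomorphic_on_blaschke_factor[OF v_in_disc]]) auto
  then have "X holomorphic_on branch_domain k t"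
    unfolding X_def using n_ge_2
    by (intro holomorphic_intros) (auto simp: branch_domain_def complex_nonpos_Reals_iff)
  moreover have "X ` branch_domain k t \<subseteq> ball 0 1"
    using branch_power[OF assms] norm_less_one_if_power_eq by (force simp: X_def branch_domain_def)
  ultimately have "(blaschke_factor (-b) \<circ> X) holomorphic_on branch_domain k t"
    using b_in_disc by (intro holomorphic_on_compose_gen[OF _ holomorphic_on_blaschke_factor]) auto
  moreover have "branch k w t = blaschke_factor (-b) \<circ> X" by (simp add: branch_def X_def fun_eq_iff)
  ultimately show ?thesis by simp
qed

lemma loop_ratio_shift: "loop_ratio k t z = loop_ratio k s z * cis (2 * pi * k * (s - t))"
  by (simp add: loop_ratio_def right_diff_distrib flip: cis_divide)

lemma loop_around_v_in_nearby_branch_domain: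
  assumes "\<bar>2 * pi * k * (s - t)\<bar> \<le> pi / 4"
  shows "loop_around_v k s \<in> branch_domain k t"
proof -
  define \<theta> where "\<theta> = 2 * pi * k * (s - t)"
  have "Re (loop_ratio k t (loop_around_v k s)) = cos \<theta>"
    using loop_ratio_shift[of k t _ s] loop_ratio_loop_around_v[of k s] by (simp add: \<theta>_def)
  also have "\<dots> > 0"
    using assms pi_gt_zero unfolding \<theta>_def[symmetric] by (intro cos_gt_zero_pi) arith+
  finally show ?thesis using loop_around_v[of k s] by (simp add: branch_domain_def)
qed

lemma branch_eq_nearby:
  assumes "\<bar>2 * pi * k * (s - t)\<bar> \<le> pi / 4" "z \<in> branch_domain k s"
  shows "branch k w s z = branch k w t z"
proof -
  define \<theta> where "\<theta> = 2 * pi * k * (s - t)"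
  have Re: "Re (loop_ratio k s z) > 0" using assms(2) by (simp add: branch_domain_def)
  have "Ln (loop_ratio k t z) = Ln (loop_ratio k s z) + \<theta> * \<i>"
  proof -
    have "\<bar>\<theta>\<bar> \<le> pi / 4" using assms(1) by (simp add: \<theta>_def)
    then have "-pi < \<theta>" "\<theta> \<le> pi" using pi_gt_zero by arith+
    then have "Ln (cis \<theta>) = \<theta> * \<i>" by (intro Ln_cis) auto
    moreover have "\<bar>Im (Ln (loop_ratio k s z))\<bar> < pi / 2" using Re_Ln_pos_lt_imp[OF Re] .
    ultimately show ?thesis
      unfolding loop_ratio_shift[of k t z s] \<theta>_def[symmetric] using Re assms(1)
      by (subst Ln_times_simple) (auto simp: \<theta>_def)
  qed
  then have "exp (Ln (loop_ratio k t z) / n) = exp (Ln (loop_ratio k s z) / n) * cis (\<theta> / n)"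
    by (simp add: cis_conv_exp add_divide_distrib exp_add mult.commute)
  then have "blaschke_factor b w * cis (2 * pi * k * t / n) * exp (Ln (loop_ratio k t z) / n) =
      blaschke_factor b w * (cis (2 * pi * k * t / n) * cis (\<theta> / n)) * exp (Ln (loop_ratio k s z) / n)"
    by (simp add: mult_ac)
  also have "cis (2 * pi * k * t / n) * cis (\<theta> / n) = cis (2 * pi * k * s / n)"
    by (simp add: cis_mult \<theta>_def add_divide_distrib[symmetric] algebra_simps)
  finally show ?thesis by (simp only: branch_def)
qed

lemma analytic_continuation_along_branch:
  assumes "w \<in> fibre0 B"
  shows "analytic_continuation_along (loop_around_v k) (branch k w) (branch_domain k)"
  unfolding analytic_continuation_along_def
proof (intro ballI conjI)
  fix t :: real assume "t \<in> {0..1}"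
  show "open (branch_domain k t)" "loop_around_v k t \<in> branch_domain k t"
    "branch k w t holomorphic_on branch_domain k t"
    using open_branch_domain loop_around_v_in_branch_domain holomorphic_branch[OF assms] by auto
  define d where "d = 1 / (8 * (k + 1))"
  have close: "\<bar>2 * pi * k * (s - t)\<bar> \<le> pi / 4" if "\<bar>s - t\<bar> < d" for s
  proof -
    have "\<bar>2 * pi * k * (s - t)\<bar> \<le> 2 * pi * k * d"
      using that by (simp add: abs_mult mult_left_mono)
    also have "\<dots> = pi / 4 * (k / (k + 1))" by (simp add: d_def field_simps)
    also have "\<dots> \<le> pi / 4" by (intro mult_left_le) auto
    finally show ?thesis .
  qed
  have near: "loop_around_v k s \<in> branch_domain k t \<and>
      (\<exists>e>0. ball (loop_around_v k s) e \<subseteq> branch_domain k s \<inter> branch_domain k t \<and>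
        (\<forall>z\<in>ball (loop_around_v k s) e. branch k w s z = branch k w t z))"
    if "\<bar>s - t\<bar> < d" for s
  proof -
    have in_t: "loop_around_v k s \<in> branch_domain k t"
      using close[OF that] loop_around_v_in_nearby_branch_domain by blast
    obtain e where "e > 0" "ball (loop_around_v k s) e \<subseteq> branch_domain k s \<inter> branch_domain k t"
      using open_Int[OF open_branch_domain open_branch_domain] in_t
        loop_around_v_in_branch_domain[of k s] open_contains_ball_eq by (metis IntI)
    then show ?thesis using in_t branch_eq_nearby close[OF that] by blast
  qed
  moreover have "d > 0" by (simp add: d_def)
  ultimately show "\<exists>d>0. \<forall>s\<in>{0..1}. \<bar>s - t\<bar> < d \<longrightarrow> loop_around_v k s \<in> branch_domain k t \<and>
      (\<exists>e>0. ball (loop_around_v k s) e \<subseteq> branch_domain k s \<inter> branch_domain k t \<and>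
        (\<forall>z\<in>ball (loop_around_v k s) e. branch k w s z = branch k w t z))"
    by blast
qed

lemma rotation_in_monodromy_perms:
  assumes "\<mu> ^ n = 1"
  shows "fibre_rotation \<mu> \<in> monodromy_perms B"
proof -
  have "\<mu> \<in> (\<lambda>k. cis (2 * pi * real k / real n)) ` {..<n}"
    using Complex.bij_betw_roots_unity[of n] n_ge_2 assms unfolding bij_betw_def by simp
  then obtain k :: nat where \<mu>: "\<mu> = cis (2 * pi * k / n)" by blast
  have ends: "branch k w 0 0 = w" "branch k w 1 0 = fibre_rotation \<mu> w" if "w \<in> fibre0 B" for w
    using that loop_ratio_loop_around_v[of k 0] loop_ratio_loop_around_v[of k 1]
      blaschke_factor_inverse_disc'[OF b_in_disc, of w]
    by (simp_all add: branch_def fibre_rotation_def fibre0_iff loop_around_v_0 loop_around_v_1 \<mu> mult.commute)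
  have local_inverse: "local_inverse_at_0 B (branch k w 0) (branch_domain k 0)" if "w \<in> fibre0 B" for w
  proof -
    obtain r where "r > 0" "ball 0 r \<subseteq> branch_domain k 0"
      using open_branch_domain[of k 0] loop_around_v_in_branch_domain[of k 0]
      unfolding loop_around_v_0 by (meson open_contains_ball_eq)
    then show ?thesis using branch_inverse[OF that] unfolding local_inverse_at_0_def by blast
  qed
  show ?thesis
    unfolding monodromy_perms_def
  proof (intro CollectI exI[of _ "loop_around_v k"] conjI ballI allI impI)
    show "path (loop_around_v k)" "pathstart (loop_around_v k) = 0" "pathfinish (loop_around_v k) = 0"
      using path_loop_around_v loop_around_v_0 loop_around_v_1 by (simp_all add: pathstart_def pathfinish_def)
    show "path_image (loop_around_v k) \<subseteq> ball 0 1 - crit_values B"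
      using loop_around_v loop_around_v_avoids_v crit_values_eq by (auto simp: path_image_def)
    show "fibre_rotation \<mu> w = w" if "w \<notin> fibre0 B" for w
      using that by (simp add: fibre_rotation_def)
    fix w assume w: "w \<in> fibre0 B"
    show "\<exists>f U. analytic_continuation_along (loop_around_v k) f U \<and> local_inverse_at_0 B (f 0) (U 0) \<and>
        f 0 0 = w \<and> f 1 0 = fibre_rotation \<mu> w"
      using analytic_continuation_along_branch[OF w] local_inverse[OF w] ends[OF w] by blast
  qed
qed

lemma norm_root_of_unity: "\<mu> ^ n = 1 \<Longrightarrow> cmod \<mu> = 1"
  using n_ge_2 by (metis norm_ge_zero norm_one norm_power power_eq_imp_eq_base power_one
      zero_le_one zero_less_numeral less_le_trans)

lemma fibre_rotation_in_fibre0: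
  assumes "\<nu> ^ n = 1" "w \<in> fibre0 B"
  shows "fibre_rotation \<nu> w \<in> fibre0 B" "blaschke_factor b (fibre_rotation \<nu> w) = \<nu> * blaschke_factor b w"
proof -
  have w: "cmod w < 1" "l * blaschke_factor b w ^ n = -v" using assms(2) fibre0_iff by auto
  have X: "cmod (\<nu> * blaschke_factor b w) < 1"
    using norm_root_of_unity[OF assms(1)] norm_blaschke_factor_less_one[OF b_in_disc w(1)]
    by (simp add: norm_mult)
  have rot: "fibre_rotation \<nu> w = blaschke_factor (-b) (\<nu> * blaschke_factor b w)"
    using assms(2) by (simp add: fibre_rotation_def)
  show \<nu>: "blaschke_factor b (fibre_rotation \<nu> w) = \<nu> * blaschke_factor b w"
    unfolding rot by (rule blaschke_factor_inverse_disc[OF b_in_disc X])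
  have "cmod (fibre_rotation \<nu> w) < 1"
    unfolding rot using norm_blaschke_factor_less_one[of "-b"] b_in_disc X by simp
  moreover have "l * blaschke_factor b (fibre_rotation \<nu> w) ^ n = -v"
    using \<nu> w(2) assms(1) by (simp add: power_mult_distrib)
  ultimately show "fibre_rotation \<nu> w \<in> fibre0 B" using fibre0_iff by simp
qed

lemma fibre_rotation_mult:
  assumes "\<nu> ^ n = 1"
  shows "fibre_rotation \<mu> \<circ> fibre_rotation \<nu> = fibre_rotation (\<mu> * \<nu>)"
proof
  fix w
  show "(fibre_rotation \<mu> \<circ> fibre_rotation \<nu>) w = fibre_rotation (\<mu> * \<nu>) w"
    using fibre_rotation_in_fibre0[OF assms] by (cases "w \<in> fibre0 B") (simp_all add: fibre_rotation_def mult_ac)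
qed

lemma fibre_rotation_1: "fibre_rotation 1 = id"
proof
  fix w
  show "fibre_rotation 1 w = id w"
    using blaschke_factor_inverse_disc'[OF b_in_disc, of w] by (simp add: fibre_rotation_def fibre0_def)
qed

lemma monodromy_perms_eq: "monodromy_perms B = fibre_rotation ` {\<mu>. \<mu> ^ n = 1}"
  using monodromy_perm_is_rotation rotation_in_monodromy_perms by blast

lemma inj_on_fibre_rotation: "inj_on fibre_rotation {\<mu>. \<mu> ^ n = 1}"
proof (rule inj_onI)
  fix \<mu> \<nu> assume "\<mu> \<in> {\<mu>. \<mu> ^ n = 1}" "\<nu> \<in> {\<mu>. \<mu> ^ n = 1}" "fibre_rotation \<mu> = fibre_rotation \<nu>"
  then have "\<mu> * blaschke_factor b 0 = \<nu> * blaschke_factor b 0"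
    using fibre_rotation_in_fibre0(2)[OF _ zero_in_fibre0, of \<mu>] fibre_rotation_in_fibre0(2)[OF _ zero_in_fibre0, of \<nu>]
    by auto
  then show "\<mu> = \<nu>" using b_nonzero by (simp add: blaschke_factor_def)
qed

lemma group_monodromy_group: "group (monodromy_group B)"
proof (rule groupI)
  have "fibre_rotation 1 \<in> fibre_rotation ` {\<mu>. \<mu> ^ n = 1}" by simp
  then show "\<one>\<^bsub>monodromy_group B\<^esub> \<in> carrier (monodromy_group B)"
    by (simp add: monodromy_group_def monodromy_perms_eq fibre_rotation_1)
next
  fix x y assume "x \<in> carrier (monodromy_group B)" "y \<in> carrier (monodromy_group B)"
  then show "x \<otimes>\<^bsub>monodromy_group B\<^esub> y \<in> carrier (monodromy_group B)"
    by (auto simp: monodromy_group_def monodromy_perms_eq fibre_rotation_mult power_mult_distrib)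
next
  fix x assume "x \<in> carrier (monodromy_group B)"
  then obtain \<mu> where \<mu>: "\<mu> ^ n = 1" "x = fibre_rotation \<mu>"
    by (auto simp: monodromy_group_def monodromy_perms_eq)
  have "\<mu> ^ (n - 1) * \<mu> = 1" using \<mu>(1) n_ge_2 by (simp flip: power_Suc2)
  moreover have "(\<mu> ^ (n - 1)) ^ n = 1" by (metis \<mu>(1) power_mult mult.commute power_one)
  ultimately show "\<exists>y\<in>carrier (monodromy_group B). y \<otimes>\<^bsub>monodromy_group B\<^esub> x = \<one>\<^bsub>monodromy_group B\<^esub>"
    using \<mu> fibre_rotation_mult fibre_rotation_1
    by (intro bexI[of _ "fibre_rotation (\<mu> ^ (n - 1))"]) (auto simp: monodromy_group_def monodromy_perms_eq)
qed (simp_all add: monodromy_group_def o_assoc)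

lemma monodromy_group_pow:
  assumes "\<omega> ^ n = 1"
  shows "fibre_rotation \<omega> [^]\<^bsub>monodromy_group B\<^esub> (m :: nat) = fibre_rotation (\<omega> ^ m)"
  using fibre_rotation_mult[OF assms] fibre_rotation_1
  by (induction m) (simp_all add: monodromy_group_def mult.commute)

lemma cyclic_group_monodromy_group: "cyclic_group (monodromy_group B)"
proof -
  define \<omega> where "\<omega> = cis (2 * pi / n)"
  have \<omega>: "\<omega> ^ n = 1" using n_ge_2 by (simp add: \<omega>_def Complex.DeMoivre)
  have "fibre_rotation \<mu> \<in> range (\<lambda>k::int. fibre_rotation \<omega> [^]\<^bsub>monodromy_group B\<^esub> k)"
    if "\<mu> ^ n = 1" for \<mu>
  proof -
    have "\<mu> \<in> (\<lambda>j. cis (2 * pi * real j / real n)) ` {..<n}"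
      using Complex.bij_betw_roots_unity[of n] n_ge_2 that unfolding bij_betw_def by simp
    then obtain j :: nat where "\<mu> = cis (2 * pi * j / n)" by blast
    then have "\<mu> = \<omega> ^ j" by (simp add: \<omega>_def Complex.DeMoivre mult_ac)
    then show ?thesis using monodromy_group_pow[OF \<omega>] int_pow_int by (metis rangeI)
  qed
  moreover have "range (\<lambda>k::int. fibre_rotation \<omega> [^]\<^bsub>monodromy_group B\<^esub> k) \<subseteq> carrier (monodromy_group B)"
    using group.int_pow_closed[OF group_monodromy_group] \<omega>
    by (auto simp: monodromy_group_def monodromy_perms_eq)
  ultimately have "carrier (monodromy_group B) = range (\<lambda>k::int. fibre_rotation \<omega> [^]\<^bsub>monodromy_group B\<^esub> k)"
    by (auto simp: monodromy_group_def monodromy_perms_eq)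
  moreover have "fibre_rotation \<omega> \<in> carrier (monodromy_group B)"
    using \<omega> by (simp add: monodromy_group_def monodromy_perms_eq)
  ultimately show ?thesis using group.cyclic_group[OF group_monodromy_group] by blast
qed

lemma order_monodromy_group: "order (monodromy_group B) = n"
  using card_image[OF inj_on_fibre_rotation] card_roots_unity_eq[of n] n_ge_2
  by (simp add: order_def monodromy_group_def monodromy_perms_eq)

end

section \<open>Critical points of products of Blaschke factors\<close>

definition log_deriv_blaschke :: "complex set \<Rightarrow> (complex \<Rightarrow> nat) \<Rightarrow> complex \<Rightarrow> complex" where
  "log_deriv_blaschke Z k x = (\<Sum>z\<in>Z. of_nat (k z) * (1 - cnj z * z) / ((x - z) * (1 - cnj z * x)))"

definition cleared_log_deriv :: "complex set \<Rightarrow> (complex \<Rightarrow> nat) \<Rightarrow> complex poly" where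
  "cleared_log_deriv Z k =
     (\<Sum>z\<in>Z. smult (of_nat (k z) * (1 - cnj z * z)) (\<Prod>z'\<in>Z-{z}. [:-z', 1:] * [:1, -cnj z':]))"

context
  fixes Z :: "complex set" and k :: "complex \<Rightarrow> nat"
  assumes finite_Z: "finite Z" and Z_in_disc: "Z \<subseteq> ball 0 1" and k_pos: "\<forall>z\<in>Z. k z > 0"
begin

lemma poly_cleared_log_deriv:
  "poly (cleared_log_deriv Z k) x =
     (\<Sum>z\<in>Z. of_nat (k z) * (1 - cnj z * z) * (\<Prod>z'\<in>Z-{z}. (x - z') * (1 - cnj z' * x)))"
  by (simp add: cleared_log_deriv_def poly_sum poly_prod algebra_simps)

lemma poly_cleared_log_deriv_eq_prod_mult:
  assumes "\<forall>z\<in>Z. (x - z) * (1 - cnj z * x) \<noteq> 0"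
  shows "poly (cleared_log_deriv Z k) x = (\<Prod>z\<in>Z. (x - z) * (1 - cnj z * x)) * log_deriv_blaschke Z k x"
proof -
  define d where "d z = (x - z) * (1 - cnj z * x)" for z
  define w where "w z = of_nat (k z) * (1 - cnj z * z)" for z
  have "(\<Prod>z\<in>Z. d z) * (w z / d z) = w z * (\<Prod>z'\<in>Z-{z}. d z')" if "z \<in> Z" for z
  proof -
    have "(\<Prod>z\<in>Z. d z) = d z * (\<Prod>z'\<in>Z-{z}. d z')" using prod.remove[OF finite_Z that] by simp
    moreover have "d z \<noteq> 0" using assms that by (simp add: d_def)
    ultimately show ?thesis by (simp add: field_simps)
  qed
  then show ?thesis
    unfolding poly_cleared_log_deriv log_deriv_blaschke_def d_def[symmetric] w_def[symmetric]
    by (simp add: sum_distrib_left)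
qed

lemma poly_cleared_log_deriv_at_Z:
  assumes "z0 \<in> Z"
  shows "poly (cleared_log_deriv Z k) z0 \<noteq> 0"
proof -
  define d where "d z = (z0 - z) * (1 - cnj z * z0)" for z
  define w where "w z = of_nat (k z) * (1 - cnj z * z)" for z
  have "(\<Sum>z\<in>Z-{z0}. w z * (\<Prod>z'\<in>Z-{z}. d z')) = 0"
  proof (rule sum.neutral, rule ballI)
    fix z assume "z \<in> Z - {z0}"
    then have "(\<Prod>z'\<in>Z-{z}. d z') = 0"
      using finite_Z assms by (intro prod_zero) (auto simp: d_def intro!: bexI[of _ z0])
    then show "w z * (\<Prod>z'\<in>Z-{z}. d z') = 0" by simp
  qed
  then have "poly (cleared_log_deriv Z k) z0 = w z0 * (\<Prod>z'\<in>Z-{z0}. d z')"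
    unfolding poly_cleared_log_deriv d_def[symmetric] w_def[symmetric]
    using sum.remove[OF finite_Z assms, of "\<lambda>z. w z * (\<Prod>z'\<in>Z-{z}. d z')"] by simp
  moreover have "d z' \<noteq> 0" if "z' \<in> Z - {z0}" for z'
    using that assms Z_in_disc blaschke_denom_nonzero[of z' z0] by (force simp: d_def)
  moreover have "w z0 \<noteq> 0"
    using assms k_pos Z_in_disc one_minus_cnj_mult_self_nonzero[of z0] by (force simp: w_def)
  ultimately show ?thesis using finite_Z by (simp add: prod_zero_iff)
qed

lemma poly_cleared_log_deriv_reflect:
  assumes "x \<noteq> 0"
  shows "poly (cleared_log_deriv Z k) x =
    x ^ (2 * (card Z - 1)) * cnj (poly (cleared_log_deriv Z k) (1 / cnj x))"
proof -
  define d where "d z y = (y - z) * (1 - cnj z * y)" for z y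
  define w where "w z = of_nat (k z) * (1 - cnj z * z)" for z
  have summand: "w z * (\<Prod>z'\<in>Z-{z}. d z' x) =
      x ^ (2 * (card Z - 1)) * cnj (w z * (\<Prod>z'\<in>Z-{z}. d z' (1 / cnj x)))" if "z \<in> Z" for z
  proof -
    have pow: "x ^ (2 * (card Z - 1)) = (\<Prod>z'\<in>Z-{z}. x^2)"
      using that finite_Z by (simp add: power_mult)
    have refl: "x^2 * cnj (d z' (1 / cnj x)) = d z' x" for z'
      using assms by (simp add: d_def field_simps power2_eq_square)
    have "x ^ (2 * (card Z - 1)) * cnj (\<Prod>z'\<in>Z-{z}. d z' (1 / cnj x)) =
          (\<Prod>z'\<in>Z-{z}. x^2) * (\<Prod>z'\<in>Z-{z}. cnj (d z' (1 / cnj x)))"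
      by (simp only: pow cnj_prod)
    also have "\<dots> = (\<Prod>z'\<in>Z-{z}. d z' x)"
      by (simp only: prod.distrib[symmetric] refl)
    finally show ?thesis by (simp add: w_def mult_ac)
  qed
  show ?thesis
    unfolding poly_cleared_log_deriv d_def[symmetric] w_def[symmetric]
    by (simp add: sum_distrib_left summand del: cnj_prod)
qed

text \<open>On the unit circle x times each summand of the logarithmic derivative is a positive
  real number.\<close>

lemma log_deriv_blaschke_on_circle:
  assumes "cmod x = 1" "Z \<noteq> {}"
  shows "log_deriv_blaschke Z k x \<noteq> 0"
proof -
  have xx: "x * cnj x = 1" using assms(1) complex_norm_square[of x] by simp
  have summand: "of_nat (k z) * (1 - cnj z * z) / ((x - z) * (1 - cnj z * x)) * x =
      of_real (real (k z) * (1 - cmod z ^ 2) / cmod (x - z) ^ 2)" if "z \<in> Z" for z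
  proof -
    define D where "D = (x - z) * (1 - cnj z * x)"
    define W where "W = of_nat (k z) * (1 - cnj z * z)"
    have "D = x * ((x - z) * cnj (x - z))" using xx by (simp add: D_def algebra_simps)
    also have "\<dots> = x * of_real (cmod (x - z) ^ 2)" using complex_norm_square[of "x - z"] by simp
    finally have D: "D = x * of_real (cmod (x - z) ^ 2)" .
    have W: "W = of_real (real (k z) * (1 - cmod z ^ 2))"
      using complex_norm_square[of z] by (simp add: W_def mult.commute)
    have "x \<noteq> 0" using assms(1) by auto
    then have "complex_of_real A / (x * complex_of_real C) * x = complex_of_real (A / C)" for A C
      by (cases "C = 0") (simp_all add: field_simps)
    then have "W / D * x = of_real (real (k z) * (1 - cmod z ^ 2) / cmod (x - z) ^ 2)"
      unfolding D W by blast
    then show ?thesis by (simp only: D_def W_def)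
  qed
  define S where "S = (\<Sum>z\<in>Z. real (k z) * (1 - cmod z ^ 2) / cmod (x - z) ^ 2)"
  have "log_deriv_blaschke Z k x * x = of_real S"
    unfolding S_def log_deriv_blaschke_def sum_distrib_right of_real_sum by (rule sum.cong[OF refl summand])
  moreover have "S > 0"
    unfolding S_def
  proof (rule sum_pos[OF finite_Z assms(2)])
    fix z assume z: "z \<in> Z"
    then have "x - z \<noteq> 0" "cmod z ^ 2 < 1"
      using assms(1) Z_in_disc by (auto simp: abs_square_less_1)
    then show "real (k z) * (1 - cmod z ^ 2) / cmod (x - z) ^ 2 > 0" using k_pos z by simp
  qed
  ultimately have "log_deriv_blaschke Z k x * x \<noteq> 0" by simp
  then show ?thesis by auto
qed

lemma cleared_log_deriv_nonconstant:
  assumes "card Z \<ge> 2"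
  shows "\<not> constant (poly (cleared_log_deriv Z k))"
proof
  assume "constant (poly (cleared_log_deriv Z k))"
  then obtain s where s: "\<And>x. poly (cleared_log_deriv Z k) x = s" unfolding constant_def by metis
  obtain z0 where "z0 \<in> Z" using assms by fastforce
  then have "s \<noteq> 0" using poly_cleared_log_deriv_at_Z s by metis
  have "s = cnj s" using poly_cleared_log_deriv_reflect[of 1] s by simp
  moreover have "s = 2 ^ (2 * (card Z - 1)) * cnj s" using poly_cleared_log_deriv_reflect[of 2] s by simp
  ultimately have "(2::complex) ^ (2 * (card Z - 1)) = 1" using \<open>s \<noteq> 0\<close> by simp
  then have "(2::real) ^ (2 * (card Z - 1)) = 1" by (metis of_real_eq_1_iff of_real_numeral of_real_power)
  moreover have "(2::real) \<le> 2 ^ (2 * (card Z - 1))" using assms by (intro self_le_power) auto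
  ultimately show False by simp
qed

text \<open>The cleared logarithmic derivative is self-reciprocal and has no zeros on the circle, so
  its roots come in pairs x, 1 / cnj x and one of them lies in the disc.\<close>

lemma log_deriv_blaschke_has_zero_in_disc:
  assumes "card Z \<ge> 2"
  obtains x0 where "cmod x0 < 1" "x0 \<notin> Z" "log_deriv_blaschke Z k x0 = 0"
proof -
  obtain x1 where x1: "poly (cleared_log_deriv Z k) x1 = 0"
    using fundamental_theorem_of_algebra[OF cleared_log_deriv_nonconstant[OF assms]] by blast
  have "Z \<noteq> {}" using assms by auto
  have "\<exists>x0. cmod x0 < 1 \<and> poly (cleared_log_deriv Z k) x0 = 0"
  proof (cases "cmod x1 < 1")
    case False
    have "cmod x1 \<noteq> 1"
    proof
      assume "cmod x1 = 1"
      then have "\<forall>z\<in>Z. (x1 - z) * (1 - cnj z * x1) \<noteq> 0"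
        using Z_in_disc blaschke_denom_nonzero by fastforce
      then show False
        using x1 poly_cleared_log_deriv_eq_prod_mult log_deriv_blaschke_on_circle[OF \<open>cmod x1 = 1\<close> \<open>Z \<noteq> {}\<close>]
          finite_Z by (auto simp: prod_zero_iff)
    qed
    then have "cmod x1 > 1" "x1 \<noteq> 0" using False by auto
    then show ?thesis
      using x1 poly_cleared_log_deriv_reflect[of "1 / cnj x1"]
      by (intro exI[of _ "1 / cnj x1"]) (simp add: norm_divide divide_less_eq)
  qed (use x1 in blast)
  then obtain x0 where x0: "cmod x0 < 1" "poly (cleared_log_deriv Z k) x0 = 0" by blast
  then have "x0 \<notin> Z" using poly_cleared_log_deriv_at_Z by blast
  moreover have "\<forall>z\<in>Z. (x0 - z) * (1 - cnj z * x0) \<noteq> 0"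
    using \<open>x0 \<notin> Z\<close> x0(1) Z_in_disc blaschke_denom_nonzero by fastforce
  ultimately show ?thesis
    using that x0 poly_cleared_log_deriv_eq_prod_mult finite_Z by (auto simp: prod_zero_iff)
qed

lemma has_field_derivative_blaschke_power_prod:
  assumes "cmod x0 < 1" "x0 \<notin> Z"
  shows "((\<lambda>x. \<Prod>z\<in>Z. blaschke_factor z x ^ k z) has_field_derivative
           (\<Prod>z\<in>Z. blaschke_factor z x0 ^ k z) * log_deriv_blaschke Z k x0) (at x0)"
proof -
  have den: "1 - cnj z * x0 \<noteq> 0" if "z \<in> Z" for z
    using blaschke_denom_nonzero[of z x0] Z_in_disc that assms(1) by auto
  have nz: "blaschke_factor z x0 \<noteq> 0" if "z \<in> Z" for z
    using blaschke_factor_eq_0_iff[OF den[OF that]] assms(2) that by auto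
  define f' where "f' z = of_nat (k z) * ((1 - cnj z * z) / (1 - cnj z * x0)^2 * blaschke_factor z x0 ^ (k z - 1))"
    for z
  have "((\<lambda>x. \<Prod>z\<in>Z. blaschke_factor z x ^ k z) has_field_derivative
      (\<Prod>z\<in>Z. blaschke_factor z x0 ^ k z) * (\<Sum>z\<in>Z. f' z / blaschke_factor z x0 ^ k z)) (at x0)"
  proof (rule has_field_derivative_prod')
    fix z assume "z \<in> Z"
    show "((\<lambda>x. blaschke_factor z x ^ k z) has_field_derivative f' z) (at x0)"
      using DERIV_power[OF has_field_derivative_blaschke_factor[OF den[OF \<open>z \<in> Z\<close>]], of "k z"]
      by (simp add: f'_def)
  qed (use nz in auto)
  moreover have "f' z / blaschke_factor z x0 ^ k z = of_nat (k z) * (1 - cnj z * z) / ((x0 - z) * (1 - cnj z * x0))"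
    if "z \<in> Z" for z
  proof -
    have "blaschke_factor z x0 ^ k z = blaschke_factor z x0 * blaschke_factor z x0 ^ (k z - 1)"
      using k_pos that by (simp flip: power_Suc)
    then show ?thesis
      using den[OF that] nz[OF that] by (simp add: f'_def blaschke_factor_def power2_eq_square)
  qed
  ultimately show ?thesis by (simp add: log_deriv_blaschke_def)
qed

end

section \<open>Blaschke products with a single critical value\<close>

lemma prod_list_divide: "(\<Prod>a\<leftarrow>as. f a / g a) = (\<Prod>a\<leftarrow>as. f a) / (\<Prod>a\<leftarrow>as. (g a :: 'a :: field))"
  by (induction as) auto

lemma norm_prod_list: "norm (\<Prod>a\<leftarrow>as. (f a :: 'a :: real_normed_field)) = (\<Prod>a\<leftarrow>as. norm (f a))"
  by (induction as) (auto simp: norm_mult)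

lemma norm_prod_list_le:
  "(\<And>a. a \<in> set as \<Longrightarrow> norm (f a) \<le> norm (g a)) \<Longrightarrow>
    norm (\<Prod>a\<leftarrow>as. (f a :: 'a :: real_normed_field)) \<le> norm (\<Prod>a\<leftarrow>as. (g a :: 'a))"
  by (induction as) (auto simp: norm_mult mult_mono)

lemma prod_list_less_one:
  "(\<And>y. y \<in> set ys \<Longrightarrow> 0 \<le> y \<and> y < (1::real)) \<Longrightarrow> ys \<noteq> [] \<Longrightarrow> prod_list ys < 1"
proof (induction ys)
  case (Cons y ys)
  have "0 \<le> prod_list ys" using Cons.prems(1) by (auto intro: prod_list_nonneg)
  moreover have "prod_list ys \<le> 1" using Cons by (cases "ys = []") auto
  moreover have "0 \<le> y" "y < 1" using Cons.prems(1)[of y] by auto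
  ultimately show ?case by (simp add: mult_le_one le_less_trans[OF mult_left_le])
qed simp

lemma degree_coeff_prod_linear:
  "degree (\<Prod>a\<leftarrow>as. [:f a, g a:]) \<le> length as \<and>
    coeff (\<Prod>a\<leftarrow>as. [:f a, g a:]) (length as) = (\<Prod>a\<leftarrow>as. (g a :: 'a :: comm_ring_1))"
proof (induction as)
  case (Cons a as)
  define P where "P = (\<Prod>a\<leftarrow>as. [:f a, g a:])"
  have "degree P \<le> length as" "coeff P (length as) = (\<Prod>a\<leftarrow>as. g a)" using Cons by (auto simp: P_def)
  moreover have "[:f a, g a:] * P = smult (f a) P + pCons 0 (smult (g a) P)"
    by (simp add: mult_pCons_left)
  moreover have "degree ([:f a, g a:] * P) \<le> Suc (length as)"
    using \<open>degree P \<le> length as\<close> by (intro order_trans[OF degree_mult_le]) simp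
  ultimately show ?case by (simp add: P_def coeff_eq_0)
qed simp

lemma poly_eq_if_eq_off_point:
  fixes p q :: "complex poly"
  assumes "\<And>x. x \<noteq> a \<Longrightarrow> poly p x = poly q x"
  shows "poly p x = poly q x"
proof -
  have "UNIV - {a} \<subseteq> {x. poly (p - q) x = 0}" using assms by auto
  moreover have "infinite (UNIV - {a} :: complex set)" by (simp add: infinite_UNIV_char_0)
  ultimately have "infinite {x. poly (p - q) x = 0}" using infinite_super by blast
  then have "p - q = 0" using poly_roots_finite by blast
  then show ?thesis by simp
qed

definition blaschke_numer :: "complex \<Rightarrow> complex list \<Rightarrow> complex poly" where
  "blaschke_numer c as = smult c (\<Prod>a\<leftarrow>as. [:-a, 1:])"

definition blaschke_denom :: "complex list \<Rightarrow> complex poly" where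
  "blaschke_denom as = (\<Prod>a\<leftarrow>as. [:1, -cnj a:])"

definition blaschke_shift_numer :: "complex \<Rightarrow> complex \<Rightarrow> complex list \<Rightarrow> complex poly" where
  "blaschke_shift_numer v c as = blaschke_numer c as - smult v (blaschke_denom as)"

definition blaschke_shift_denom :: "complex \<Rightarrow> complex \<Rightarrow> complex list \<Rightarrow> complex poly" where
  "blaschke_shift_denom v c as = blaschke_denom as - smult (cnj v) (blaschke_numer c as)"

lemma poly_blaschke_numer: "poly (blaschke_numer c as) x = c * (\<Prod>a\<leftarrow>as. x - a)"
  by (induction as) (auto simp: blaschke_numer_def algebra_simps)

lemma poly_blaschke_denom: "poly (blaschke_denom as) x = (\<Prod>a\<leftarrow>as. 1 - cnj a * x)"
  by (induction as) (auto simp: blaschke_denom_def algebra_simps)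

lemma blaschke_eq_numer_divide_denom:
  "blaschke c as x = poly (blaschke_numer c as) x / poly (blaschke_denom as) x"
  by (simp add: blaschke_def poly_blaschke_numer poly_blaschke_denom prod_list_divide)

lemma blaschke_eq_prod_blaschke_factor: "blaschke c as x = c * (\<Prod>a\<leftarrow>as. blaschke_factor a x)"
  by (simp add: blaschke_def blaschke_factor_def)

context
  fixes c :: complex and as :: "complex list"
  assumes norm_c: "cmod c = 1" and as_in_disc: "\<forall>a\<in>set as. cmod a < 1"
begin

lemma poly_blaschke_denom_nonzero: "cmod x \<le> 1 \<Longrightarrow> poly (blaschke_denom as) x \<noteq> 0"
  using as_in_disc blaschke_denom_nonzero by (auto simp: poly_blaschke_denom prod_list_zero_iff)

lemma poly_blaschke_numer_nonzero: "cmod x \<ge> 1 \<Longrightarrow> poly (blaschke_numer c as) x \<noteq> 0"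
  using as_in_disc norm_c by (auto simp: poly_blaschke_numer prod_list_zero_iff)

lemma norm_poly_blaschke_denom_le_numer:
  "cmod x \<ge> 1 \<Longrightarrow> cmod (poly (blaschke_denom as) x) \<le> cmod (poly (blaschke_numer c as) x)"
  using as_in_disc norm_c norm_denom_le_norm_numer
  by (simp add: poly_blaschke_numer poly_blaschke_denom norm_mult norm_prod_list_le)

lemma norm_blaschke_less_one:
  assumes "cmod x < 1" "as \<noteq> []"
  shows "cmod (blaschke c as x) < 1"
proof -
  have "cmod (blaschke c as x) = (\<Prod>a\<leftarrow>as. cmod (blaschke_factor a x))"
    using norm_c by (simp add: blaschke_eq_prod_blaschke_factor norm_mult norm_prod_list)
  also have "\<dots> < 1"
    using assms as_in_disc norm_blaschke_factor_less_one by (intro prod_list_less_one) auto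
  finally show ?thesis .
qed

lemma poly_blaschke_reflect:
  assumes "x \<noteq> 0"
  shows "x ^ length as * cnj (poly (blaschke_numer c as) (1 / cnj x)) = cnj c * poly (blaschke_denom as) x"
    and "x ^ length as * cnj (poly (blaschke_denom as) (1 / cnj x)) = poly (blaschke_numer c as) x / c"
proof -
  have "x ^ length as * cnj (\<Prod>a\<leftarrow>as. 1 / cnj x - a) = (\<Prod>a\<leftarrow>as. 1 - cnj a * x)"
    by (induction as) (use assms in \<open>auto simp: field_simps\<close>)
  moreover have "x ^ length as * cnj (\<Prod>a\<leftarrow>as. 1 - cnj a * (1 / cnj x)) = (\<Prod>a\<leftarrow>as. x - a)"
    by (induction as) (use assms in \<open>auto simp: field_simps\<close>)
  ultimately show "x ^ length as * cnj (poly (blaschke_numer c as) (1 / cnj x)) = cnj c * poly (blaschke_denom as) x"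
    and "x ^ length as * cnj (poly (blaschke_denom as) (1 / cnj x)) = poly (blaschke_numer c as) x / c"
    using norm_c by (auto simp: poly_blaschke_numer poly_blaschke_denom mult_ac)
qed

lemma blaschke_factor_blaschke:
  assumes "cmod x < 1"
  shows "blaschke_factor v (blaschke c as x) =
    poly (blaschke_shift_numer v c as) x / poly (blaschke_shift_denom v c as) x"
proof -
  define P where "P = poly (blaschke_numer c as) x"
  define D where "D = poly (blaschke_denom as) x"
  have "D \<noteq> 0" using poly_blaschke_denom_nonzero[of x] assms by (simp add: D_def)
  then have "P / D - v = (P - v * D) / D" "1 - cnj v * (P / D) = (D - cnj v * P) / D"
    by (simp_all add: field_simps)
  moreover have "(A / D) / (E / D) = A / E" for A E using \<open>D \<noteq> 0\<close> by simp
  ultimately show ?thesis using \<open>D \<noteq> 0\<close>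
    by (simp add: blaschke_factor_def blaschke_eq_numer_divide_denom blaschke_shift_numer_def
        blaschke_shift_denom_def P_def[symmetric] D_def[symmetric])
qed

lemma poly_blaschke_shift_denom_reflect:
  assumes "x \<noteq> 0"
  shows "poly (blaschke_shift_denom v c as) x = c * x ^ length as * cnj (poly (blaschke_shift_numer v c as) (1 / cnj x))"
proof -
  have "c * cnj c = 1" using norm_c complex_norm_square[of c] by simp
  have "c * x ^ length as * cnj (poly (blaschke_shift_numer v c as) (1 / cnj x)) =
      c * (x ^ length as * cnj (poly (blaschke_numer c as) (1 / cnj x))) -
      c * cnj v * (x ^ length as * cnj (poly (blaschke_denom as) (1 / cnj x)))"
    by (simp add: blaschke_shift_numer_def algebra_simps)
  also have "\<dots> = poly (blaschke_shift_denom v c as) x"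
    using poly_blaschke_reflect[OF assms] norm_c \<open>c * cnj c = 1\<close>
    by (auto simp: blaschke_shift_denom_def mult.assoc[symmetric])
  finally show ?thesis ..
qed

lemma degree_blaschke_shift_numer:
  assumes "cmod v < 1"
  shows "degree (blaschke_shift_numer v c as) = length as" "blaschke_shift_numer v c as \<noteq> 0"
proof -
  define N where "N = blaschke_shift_numer v c as"
  have numer: "degree (\<Prod>a\<leftarrow>as. [:-a, 1:]) \<le> length as" "coeff (\<Prod>a\<leftarrow>as. [:-a, 1:]) (length as) = 1"
    using degree_coeff_prod_linear[of "\<lambda>a. -a" "\<lambda>a. 1" as] by (simp_all add: map_replicate_const)
  have denom: "degree (blaschke_denom as) \<le> length as"
    "coeff (blaschke_denom as) (length as) = (\<Prod>a\<leftarrow>as. - cnj a)"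
    using degree_coeff_prod_linear[of "\<lambda>a. 1" "\<lambda>a. - cnj a" as] by (simp_all add: blaschke_denom_def)
  have "cmod (\<Prod>a\<leftarrow>as. - cnj a) \<le> 1"
    using norm_prod_list_le[of as "\<lambda>a. - cnj a" "\<lambda>a. 1"] as_in_disc
    by (force simp: map_replicate_const)
  then have "cmod (v * (\<Prod>a\<leftarrow>as. - cnj a)) < 1"
    using assms by (simp add: norm_mult mult_le_less_imp_less[of _ 1 "cmod v" 1] le_less_trans[OF mult_right_le_one_le])
  then have lead: "coeff N (length as) \<noteq> 0"
    using numer denom norm_c by (auto simp: N_def blaschke_shift_numer_def blaschke_numer_def)
  moreover have "degree N \<le> length as"
    unfolding N_def blaschke_shift_numer_def blaschke_numer_def
    by (intro degree_diff_le) (use numer denom in \<open>auto intro: order_trans[OF degree_smult_le]\<close>)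
  ultimately show "degree N = length as" "N \<noteq> 0" using le_degree[OF lead] by auto
qed

lemma blaschke_shift_numer_roots_in_disc:
  assumes "cmod v < 1" "poly (blaschke_shift_numer v c as) z = 0"
  shows "cmod z < 1"
proof (rule ccontr)
  assume "\<not> cmod z < 1"
  then have "cmod z \<ge> 1" by simp
  define P where "P = poly (blaschke_numer c as) z"
  have "P = v * poly (blaschke_denom as) z" using assms(2) by (simp add: P_def blaschke_shift_numer_def)
  then have "cmod P \<le> cmod v * cmod P"
    using norm_poly_blaschke_denom_le_numer[OF \<open>cmod z \<ge> 1\<close>]
    by (simp add: P_def norm_mult mult_left_mono)
  also have "\<dots> < cmod P"
    using assms(1) poly_blaschke_numer_nonzero[OF \<open>cmod z \<ge> 1\<close>] by (simp add: P_def)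
  finally show False by simp
qed

lemma poly_blaschke_shift_denom_eq:
  assumes "finite Z" "(\<Sum>z\<in>Z. k z) = length as"
    and numer: "\<And>x. poly (blaschke_shift_numer v c as) x = L * (\<Prod>z\<in>Z. (x - z) ^ k z)"
  shows "poly (blaschke_shift_denom v c as) x = c * cnj L * (\<Prod>z\<in>Z. (1 - cnj z * x) ^ k z)"
proof -
  define G where "G = smult (c * cnj L) (\<Prod>z\<in>Z. [:1, - cnj z:] ^ k z)"
  have G: "poly G x = c * cnj L * (\<Prod>z\<in>Z. (1 - cnj z * x) ^ k z)" for x
    by (simp add: G_def poly_prod algebra_simps)
  have "poly (blaschke_shift_denom v c as) x = poly G x" if "x \<noteq> 0" for x
  proof -
    have "x ^ length as = (\<Prod>z\<in>Z. x ^ k z)" using assms(2) power_sum[of x k Z] by simp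
    then have "x ^ length as * cnj (poly (blaschke_shift_numer v c as) (1 / cnj x)) =
        cnj L * (\<Prod>z\<in>Z. (x * cnj (1 / cnj x - z)) ^ k z)"
      by (simp add: numer prod.distrib[symmetric] power_mult_distrib)
    also have "\<dots> = cnj L * (\<Prod>z\<in>Z. (1 - cnj z * x) ^ k z)"
    proof -
      have "x * cnj (1 / cnj x - z) = 1 - cnj z * x" for z using \<open>x \<noteq> 0\<close> by (simp add: field_simps)
      then show ?thesis by simp
    qed
    finally show ?thesis using poly_blaschke_shift_denom_reflect[OF \<open>x \<noteq> 0\<close>] G by (simp add: mult_ac)
  qed
  then show ?thesis using poly_eq_if_eq_off_point G by metis
qed

lemma blaschke_factor_comp_blaschke:
  assumes "cmod v < 1"
  obtains Z k lam where "finite Z" "Z \<subseteq> ball 0 1" "\<forall>z\<in>Z. k z > 0" "(\<Sum>z\<in>Z. k z) = length as"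
    "cmod lam = 1" "\<And>x. cmod x < 1 \<Longrightarrow> blaschke_factor v (blaschke c as x) = lam * (\<Prod>z\<in>Z. blaschke_factor z x ^ k z)"
proof -
  define N where "N = blaschke_shift_numer v c as"
  define Z where "Z = {z. poly N z = 0}"
  define k where "k z = Polynomial.order z N" for z
  define L where "L = lead_coeff N"
  have "N \<noteq> 0" using degree_blaschke_shift_numer[OF assms] by (simp add: N_def)
  then have "L \<noteq> 0" by (simp add: L_def)
  have N_eq: "N = smult L (\<Prod>z\<in>Z. [:-z, 1:] ^ k z)"
    using complex_poly_decompose[of N] by (simp add: L_def Z_def k_def)
  have numer: "poly N x = L * (\<Prod>z\<in>Z. (x - z) ^ k z)" for x
    by (subst N_eq) (simp add: poly_prod algebra_simps)
  have "finite Z" using poly_roots_finite[OF \<open>N \<noteq> 0\<close>] by (simp add: Z_def)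
  have "length as = degree (\<Prod>z\<in>Z. [:-z, 1:] ^ k z)"
    using degree_blaschke_shift_numer[OF assms] N_eq \<open>L \<noteq> 0\<close> by (metis N_def degree_smult_eq)
  also have "\<dots> = (\<Sum>z\<in>Z. k z)" by (simp add: degree_prod_sum_eq degree_linear_power)
  finally have sum_k: "(\<Sum>z\<in>Z. k z) = length as" ..
  define lam where "lam = L / (c * cnj L)"
  have "blaschke_factor v (blaschke c as x) = lam * (\<Prod>z\<in>Z. blaschke_factor z x ^ k z)" if "cmod x < 1" for x
  proof -
    have "blaschke_factor v (blaschke c as x) = L * (\<Prod>z\<in>Z. (x - z) ^ k z) / (c * cnj L * (\<Prod>z\<in>Z. (1 - cnj z * x) ^ k z))"
      using blaschke_factor_blaschke[OF that] numer poly_blaschke_shift_denom_eq[OF \<open>finite Z\<close> sum_k]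
      by (simp add: N_def)
    then show ?thesis by (simp add: lam_def blaschke_factor_def prod_dividef power_divide)
  qed
  moreover have "Z \<subseteq> ball 0 1"
    using blaschke_shift_numer_roots_in_disc[OF assms] by (auto simp: Z_def N_def)
  moreover have "\<forall>z\<in>Z. k z > 0" using \<open>N \<noteq> 0\<close> order_root by (auto simp: Z_def k_def)
  moreover have "cmod lam = 1" using norm_c \<open>L \<noteq> 0\<close> by (simp add: lam_def norm_divide norm_mult)
  ultimately show ?thesis using that \<open>finite Z\<close> sum_k by blast
qed

end

lemma card_zeros_less_2_if_single_critical_value:
  fixes B :: "complex \<Rightarrow> complex"
  assumes Z: "finite Z" "Z \<subseteq> ball 0 1" "\<forall>z\<in>Z. k z > 0" and "cmod v < 1" "cmod lam = 1"
    and factor: "\<And>x. cmod x < 1 \<Longrightarrow> blaschke_factor v (B x) = lam * (\<Prod>z\<in>Z. blaschke_factor z x ^ k z)"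
    and B_in_disc: "\<And>x. cmod x < 1 \<Longrightarrow> cmod (B x) < 1"
    and crit: "\<And>x. cmod x < 1 \<Longrightarrow> deriv B x = 0 \<Longrightarrow> B x = v"
  shows "card Z < 2"
proof (rule ccontr)
  assume "\<not> card Z < 2"
  then obtain x0 where x0: "cmod x0 < 1" "x0 \<notin> Z" "log_deriv_blaschke Z k x0 = 0"
    using log_deriv_blaschke_has_zero_in_disc[OF Z] by (metis not_less)
  define G where "G x = (\<Prod>z\<in>Z. blaschke_factor z x ^ k z)" for x
  have "(G has_field_derivative 0) (at x0)"
    using has_field_derivative_blaschke_power_prod[OF Z x0(1,2)] x0(3) by (simp add: G_def[abs_def])
  moreover have inv: "B x = blaschke_factor (-v) (lam * G x)" if "x \<in> ball 0 1" for x
  proof -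
    have "B x = blaschke_factor (-v) (blaschke_factor v (B x))"
      using blaschke_factor_inverse_disc'[OF \<open>cmod v < 1\<close>, of "B x"] B_in_disc[of x] that by simp
    then show ?thesis using factor[of x] that by (simp add: G_def)
  qed
  moreover have "cmod (lam * G x0) < 1"
    using factor[OF x0(1)] norm_blaschke_factor_less_one[OF \<open>cmod v < 1\<close> B_in_disc[OF x0(1)]]
    by (simp add: G_def)
  then have "1 - cnj (-v) * (lam * G x0) \<noteq> 0"
    using blaschke_denom_nonzero[of "-v" "lam * G x0"] \<open>cmod v < 1\<close> by simp
  ultimately have "((\<lambda>x. blaschke_factor (-v) (lam * G x)) has_field_derivative
      (1 - cnj (-v) * (-v)) / (1 - cnj (-v) * (lam * G x0))^2 * (lam * 0)) (at x0)"
    by (intro DERIV_chain2[OF has_field_derivative_blaschke_factor] DERIV_cmult)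
  then have "((\<lambda>x. blaschke_factor (-v) (lam * G x)) has_field_derivative 0) (at x0)" by simp
  moreover have "x0 \<in> ball 0 1" using x0(1) by simp
  ultimately have "(B has_field_derivative 0) (at x0)"
    by (rule has_field_derivative_transform_within_open[OF _ open_ball]) (use inv in simp)
  then have "B x0 = v" using crit[OF x0(1)] DERIV_imp_deriv by blast
  then have "G x0 = 0"
    using factor[OF x0(1)] \<open>cmod lam = 1\<close> by (auto simp: G_def blaschke_factor_def)
  then obtain z where "z \<in> Z" "blaschke_factor z x0 = 0"
    using Z(1) by (auto simp: G_def prod_zero_iff)
  then show False
    using x0 Z(2) blaschke_factor_eq_0_iff blaschke_denom_nonzero[of z x0] by force
qed

lemma deriv_eq_0_iff_if_eq_blaschke_factor_power:
  fixes B :: "complex \<Rightarrow> complex"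
  assumes "cmod b < 1" "cmod v < 1" "cmod l = 1" "n \<ge> 1"
    and B: "\<And>x. x \<in> ball 0 1 \<Longrightarrow> B x = blaschke_factor (-v) (l * blaschke_factor b x ^ n)"
    and x: "cmod x < 1"
  shows "deriv B x = 0 \<longleftrightarrow> n \<ge> 2 \<and> x = b"
proof -
  define y where "y = l * blaschke_factor b x ^ n"
  have den_b: "1 - cnj b * x \<noteq> 0" using blaschke_denom_nonzero[of b x] assms(1) x by simp
  have "cmod (blaschke_factor b x) ^ n < 1"
    using norm_blaschke_factor_less_one[OF assms(1) x] assms(4) by (simp add: power_less_one_iff)
  then have "cmod y < 1" using assms(3) by (simp add: y_def norm_mult norm_power)
  then have den_v: "1 - cnj (-v) * y \<noteq> 0" using blaschke_denom_nonzero[of "-v" y] assms(2) by simp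
  define Dv where "Dv = (1 - cnj (-v) * (-v)) / (1 - cnj (-v) * y)^2"
  define Db where "Db = (1 - cnj b * b) / (1 - cnj b * x)^2"
  have "((\<lambda>x. blaschke_factor (-v) (l * blaschke_factor b x ^ n)) has_field_derivative
      Dv * (l * (of_nat n * (Db * blaschke_factor b x ^ (n - 1))))) (at x)"
    unfolding Dv_def Db_def y_def
    using DERIV_chain2[OF has_field_derivative_blaschke_factor[OF den_v[unfolded y_def]]
        DERIV_cmult[OF DERIV_power[OF has_field_derivative_blaschke_factor[OF den_b]]]]
    by simp
  moreover have "x \<in> ball 0 1" using x by simp
  ultimately have "(B has_field_derivative Dv * (l * (of_nat n * (Db * blaschke_factor b x ^ (n - 1))))) (at x)"
    by (rule has_field_derivative_transform_within_open[OF _ open_ball]) (use B in simp)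
  then have "deriv B x = Dv * (l * (of_nat n * (Db * blaschke_factor b x ^ (n - 1))))"
    by (rule DERIV_imp_deriv)
  moreover have "Dv \<noteq> 0" "Db \<noteq> 0" "l \<noteq> 0"
    using den_v den_b assms one_minus_cnj_mult_self_nonzero[of v] one_minus_cnj_mult_self_nonzero[of b]
    by (auto simp: Dv_def Db_def)
  moreover have "blaschke_factor b x = 0 \<longleftrightarrow> x = b" using blaschke_factor_eq_0_iff[OF den_b] .
  ultimately show ?thesis using assms(4) by auto
qed

lemma unicritical_form_if_single_critical_value:
  assumes "normalized_blaschke c as" "length as = n" "card (crit_values (blaschke c as)) = 1"
  shows "\<exists>b v l. unicritical_form (blaschke c as) b v l n"
proof -
  define B where "B = blaschke c as"
  have c: "cmod c = 1" and as: "\<forall>a\<in>set as. cmod a < 1" and "B 0 = 0"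
    and "Re (deriv B 0) > 0" and simple_zeros: "\<forall>a\<in>ball 0 1. B a = 0 \<longrightarrow> deriv B a \<noteq> 0"
    using assms(1) unfolding normalized_blaschke_def B_def by auto
  obtain v where crit: "crit_values B = {v}" using assms(3) card_1_singletonE B_def by blast
  then have "v \<in> B ` crit_points B" by (simp add: crit_values_def)
  then obtain a0 where a0: "cmod a0 < 1" "deriv B a0 = 0" "B a0 = v"
    unfolding crit_points_def by auto
  have crit_imp: "B x = v" if "cmod x < 1" "deriv B x = 0" for x
    using crit that unfolding crit_values_def crit_points_def by auto
  have "as \<noteq> []" using \<open>B 0 = 0\<close> c by (auto simp: B_def blaschke_def)
  then have B_disc: "cmod (B x) < 1" if "cmod x < 1" for x
    using norm_blaschke_less_one[OF c as that] by (simp add: B_def)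
  then have v: "cmod v < 1" using a0 by auto
  obtain Z k lam where Z: "finite Z" "Z \<subseteq> ball 0 1" "\<forall>z\<in>Z. k z > 0" and sum_k: "(\<Sum>z\<in>Z. k z) = n"
    and lam: "cmod lam = 1" and factor: "\<And>x. cmod x < 1 \<Longrightarrow> blaschke_factor v (B x) = lam * (\<Prod>z\<in>Z. blaschke_factor z x ^ k z)"
    using blaschke_factor_comp_blaschke[OF c as v] assms(2) unfolding B_def by metis
  have "n \<ge> 1" using \<open>as \<noteq> []\<close> assms(2) by (cases as) auto
  then have "Z \<noteq> {}" using sum_k by auto
  moreover have "card Z < 2"
    using card_zeros_less_2_if_single_critical_value[OF Z v lam factor B_disc crit_imp] by blast
  ultimately have "card Z = 1" using Z(1) card_0_eq[of Z] by linarith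
  then obtain b where "Z = {b}" by (rule card_1_singletonE)
  then have b: "cmod b < 1" and k_b: "k b = n" using Z(2) sum_k by auto
  have B_eq: "B x = blaschke_factor (-v) (lam * blaschke_factor b x ^ n)" if "x \<in> ball 0 1" for x
  proof -
    have "B x = blaschke_factor (-v) (blaschke_factor v (B x))"
      using blaschke_factor_inverse_disc'[OF v, of "B x"] B_disc[of x] that by simp
    then show ?thesis using factor[of x] that \<open>Z = {b}\<close> k_b by simp
  qed
  have deriv_iff: "deriv B x = 0 \<longleftrightarrow> n \<ge> 2 \<and> x = b" if "cmod x < 1" for x
    by (rule deriv_eq_0_iff_if_eq_blaschke_factor_power[OF b v lam \<open>n \<ge> 1\<close>]) (use B_eq that in auto)
  have "n \<ge> 2" using deriv_iff[OF a0(1)] a0(2) by auto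
  moreover have "b \<noteq> 0" using deriv_iff[of 0] \<open>n \<ge> 2\<close> \<open>Re (deriv B 0) > 0\<close> by auto
  moreover have "v \<noteq> 0" using simple_zeros a0 by auto
  ultimately have "unicritical_form B b v lam n"
    using b v lam crit B_eq \<open>B 0 = 0\<close> by unfold_locales auto
  then show ?thesis unfolding B_def by blast
qed

theorem proposition5p3:
  fixes c :: complex and as :: "complex list" and n :: nat
  assumes "normalized_blaschke c as"
    and "length as = n"
    and "card (crit_values (blaschke c as)) = 1"
  shows "group (monodromy_group (blaschke c as)) \<and>
         cyclic_group (monodromy_group (blaschke c as)) \<and>
         order (monodromy_group (blaschke c as)) = n"
proof -
  obtain b v l where "unicritical_form (blaschke c as) b v l n"
    using unicritical_form_if_single_critical_value[OF assms] by blast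
  then show ?thesis
    using unicritical_form.group_monodromy_group unicritical_form.cyclic_group_monodromy_group
      unicritical_form.order_monodromy_group by blast
qed

end
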